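(* For an integer sequence $(S_n)_{n\ge0}$, integers $k\ge1$ and $n\ge0$, set $\sigma_S(k,n) = \sum_{i=1}^{k} S_{n+i}$. Then for all $k \geq 1$ and $n \geq 0$: (1) $\sigma_P(k,n) = \tfrac12(Q_{n+k+1}-Q_{n+1})$, and this equals $2P_{k/2}P_{k/2+n+1}$ if $k\equiv 0 \pmod 4$ and $Q_{k/2}Q_{k/2+n+1}$ if $k \equiv 2 \pmod 4$; (2) $\sigma_Q(k,n) = P_{n+k+1}-P_{n+1}$, and this equals $2P_{k/2}Q_{k/2+n+1}$ if $k\equiv 0 \pmod 4$ and $2Q_{k/2}P_{k/2+n+1}$ if $k \equiv 2 \pmod 4$; (3) $\sigma_B(k,n) = \tfrac14(P_{2k+2n+1}-P_{2n+1})$, and this equals $\tfrac12 P_k Q_{k+2n+1}$ if $k$ is even and $\tfrac12 Q_k P_{k+2n+1}$ if $k$ is odd; (4) $\sigma_C(k,n) = \tfrac12(Q_{2k+2n+1}-Q_{2n+1})$, and this equals $2P_kP_{k+2n+1}$ if $k$ is even and $Q_kQ_{k+2n+1}$ if $k$ is odd; (5) $\sigma_c(k,n) = \tfrac12(Q_{2k+2n}-Q_{2n})$, and this equals $2P_kP_{k+2n}$ if $k$ is even and $Q_kQ_{k+2n}$ if $k$ is odd.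
   Context: The Pell sequence $(P_n)_{n\ge0}$: $P_0=0$, $P_1=1$, $P_n = 2P_{n-1}+P_{n-2}$. The associated Pell sequence $(Q_n)_{n\ge0}$: $Q_0=1$, $Q_1=1$, $Q_n=2Q_{n-1}+Q_{n-2}$. The balancing sequence $(B_n)_{n\ge0}$: $B_0=0$, $B_1=1$, $B_n=6B_{n-1}-B_{n-2}$. The Lucas-balancing sequence $(C_n)_{n\ge0}$: $C_0=1$, $C_1=3$, $C_n=6C_{n-1}-C_{n-2}$. The Lucas-cobalancing sequence $(c_n)_{n\ge0}$: $c_0=-1$, $c_1=1$, $c_n=6c_{n-1}-c_{n-2}$. *)

theory Defs
  imports Complex_Main
begin

fun pell :: "nat \<Rightarrow> int" where
  "pell 0 = 0"
| "pell (Suc 0) = 1"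
| "pell (Suc (Suc n)) = 2 * pell (Suc n) + pell n"

fun apell :: "nat \<Rightarrow> int" where
  "apell 0 = 1"
| "apell (Suc 0) = 1"
| "apell (Suc (Suc n)) = 2 * apell (Suc n) + apell n"

fun bal :: "nat \<Rightarrow> int" where
  "bal 0 = 0"
| "bal (Suc 0) = 1"
| "bal (Suc (Suc n)) = 6 * bal (Suc n) - bal n"

fun lbal :: "nat \<Rightarrow> int" where
  "lbal 0 = 1"
| "lbal (Suc 0) = 3"
| "lbal (Suc (Suc n)) = 6 * lbal (Suc n) - lbal n"

fun lcobal :: "nat \<Rightarrow> int" where
  "lcobal 0 = -1"
| "lcobal (Suc 0) = 1"
| "lcobal (Suc (Suc n)) = 6 * lcobal (Suc n) - lcobal n"

definition sigma :: "(nat \<Rightarrow> int) \<Rightarrow> nat \<Rightarrow> nat \<Rightarrow> int" where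
  "sigma S k n = (\<Sum>i=1..k. S (n + i))"

end

theory Submission
  imports Defs
begin

text \<open>
  Each sum telescopes: 2 P(j), Q(j), 4 B(j), 2 C(j) and 2 c(j) are consecutive differences
  of Q(j), P(j), P(2j + 1), Q(2j + 1) and Q(2j), because the balancing-type sequences are
  bisections of the Pell sequences: 2 B(n) = P(2n), C(n) = Q(2n), c(n + 1) = Q(2n + 1).
  A difference X(m + 2h) - X(m) then factors according to the parity of h, by the addition
  formulas combined with Q(h)^2 - 2 P(h)^2 = (-1)^h.
\<close>

lemma pell_Suc: "pell (Suc n) = pell n + apell n"
  and apell_Suc: "apell (Suc n) = apell n + 2 * pell n"
  by (induction n rule: induct_nat_012) simp_all

lemma apell_sq_minus_pell_sq: "apell n ^ 2 - 2 * pell n ^ 2 = (-1) ^ n"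
proof (induction n)
  case (Suc n)
  then show ?case by (simp add: pell_Suc apell_Suc power2_eq_square algebra_simps)
qed simp

lemma pell_add: "pell (m + n) = pell m * apell n + apell m * pell n"
  and apell_add: "apell (m + n) = apell m * apell n + 2 * pell m * pell n"
  by (induction n) (simp_all add: pell_Suc apell_Suc algebra_simps)

lemma pell_sub: "(-1) ^ n * pell m = pell (m + n) * apell n - apell (m + n) * pell n"
  and apell_sub: "(-1) ^ n * apell m = apell (m + n) * apell n - 2 * pell (m + n) * pell n"
proof -
  have "(-1) ^ n * pell m = (apell n ^ 2 - 2 * pell n ^ 2) * pell m"
    and "(-1) ^ n * apell m = (apell n ^ 2 - 2 * pell n ^ 2) * apell m"
    by (simp_all only: apell_sq_minus_pell_sq)
  then show "(-1) ^ n * pell m = pell (m + n) * apell n - apell (m + n) * pell n"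
    and "(-1) ^ n * apell m = apell (m + n) * apell n - 2 * pell (m + n) * pell n"
    by (simp_all add: pell_add apell_add power2_eq_square algebra_simps)
qed

lemma pell_add_double_minus: "pell (m + 2 * n) - (-1) ^ n * pell m = 2 * apell (m + n) * pell n"
  and pell_add_double_plus: "pell (m + 2 * n) + (-1) ^ n * pell m = 2 * pell (m + n) * apell n"
  and apell_add_double_minus: "apell (m + 2 * n) - (-1) ^ n * apell m = 4 * pell (m + n) * pell n"
  and apell_add_double_plus: "apell (m + 2 * n) + (-1) ^ n * apell m = 2 * apell (m + n) * apell n"
proof -
  have "m + 2 * n = (m + n) + n" by simp
  then have "pell (m + 2 * n) = pell (m + n) * apell n + apell (m + n) * pell n"
    and "apell (m + 2 * n) = apell (m + n) * apell n + 2 * pell (m + n) * pell n"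
    by (simp_all only: pell_add apell_add)
  with pell_sub[of n m] apell_sub[of n m]
  show "pell (m + 2 * n) - (-1) ^ n * pell m = 2 * apell (m + n) * pell n"
    and "pell (m + 2 * n) + (-1) ^ n * pell m = 2 * pell (m + n) * apell n"
    and "apell (m + 2 * n) - (-1) ^ n * apell m = 4 * pell (m + n) * pell n"
    and "apell (m + 2 * n) + (-1) ^ n * apell m = 2 * apell (m + n) * apell n"
    by linarith+
qed

lemma sigma_telescoping:
  assumes "\<And>j. c * S (Suc j) = T (Suc j) - T j"
  shows "c * sigma S k n = T (n + k) - T n"
proof (induction k)
  case (Suc k)
  then show ?case using assms[of "n + k"] by (simp add: sigma_def algebra_simps)
qed (simp add: sigma_def)

lemma balancing_recurrence_unique:
  fixes f g :: "nat \<Rightarrow> int"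
  assumes "f 0 = g 0" "f 1 = g 1"
    and "\<And>n. f (n + 2) = 6 * f (n + 1) - f n" "\<And>n. g (n + 2) = 6 * g (n + 1) - g n"
  shows "f n = g n"
proof (induction n rule: induct_nat_012)
  case (ge2 n)
  then show ?case using assms(3,4)[of n] by simp
qed (use assms in simp_all)

lemma bal_eq_pell: "2 * bal n = pell (2 * n)"
  using balancing_recurrence_unique[of "\<lambda>n. 2 * bal n" "\<lambda>n. pell (2 * n)"]
  by (simp add: numeral_eq_Suc)

lemma lbal_eq_apell: "lbal n = apell (2 * n)"
  using balancing_recurrence_unique[of lbal "\<lambda>n. apell (2 * n)"]
  by (simp add: numeral_eq_Suc)

lemma lcobal_eq_apell: "lcobal (Suc n) = apell (2 * n + 1)"
  using balancing_recurrence_unique[of "\<lambda>n. lcobal (Suc n)" "\<lambda>n. apell (2 * n + 1)"]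
  by (simp add: numeral_eq_Suc)

lemma sigma_pell: "2 * sigma pell k n = apell (n + k + 1) - apell (n + 1)"
  using sigma_telescoping[of 2 pell "\<lambda>j. apell (j + 1)" k n] by (simp add: apell_Suc)

lemma sigma_apell: "sigma apell k n = pell (n + k + 1) - pell (n + 1)"
  using sigma_telescoping[of 1 apell "\<lambda>j. pell (j + 1)" k n] by (simp add: pell_Suc)

lemma sigma_bal: "4 * sigma bal k n = pell (2 * k + 2 * n + 1) - pell (2 * n + 1)"
proof -
  have "4 * bal (Suc j) = pell (2 * Suc j + 1) - pell (2 * j + 1)" for j
    using bal_eq_pell[of "Suc j"] by simp
  from sigma_telescoping[of 4 bal, OF this] show ?thesis by (simp add: algebra_simps)
qed

lemma sigma_lbal: "2 * sigma lbal k n = apell (2 * k + 2 * n + 1) - apell (2 * n + 1)"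
  using sigma_telescoping[of 2 lbal "\<lambda>j. apell (2 * j + 1)" k n]
  by (simp add: lbal_eq_apell algebra_simps)

lemma sigma_lcobal: "2 * sigma lcobal k n = apell (2 * k + 2 * n) - apell (2 * n)"
  using sigma_telescoping[of 2 lcobal "\<lambda>j. apell (2 * j)" k n]
  by (simp add: lcobal_eq_apell algebra_simps)

lemma sigma_pell_double_even:
  "even h \<Longrightarrow> sigma pell (2 * h) n = 2 * pell h * pell (h + n + 1)"
  using sigma_pell[of "2 * h" n] apell_add_double_minus[of "n + 1" h] by (simp add: algebra_simps)

lemma sigma_pell_double_odd:
  "odd h \<Longrightarrow> sigma pell (2 * h) n = apell h * apell (h + n + 1)"
  using sigma_pell[of "2 * h" n] apell_add_double_plus[of "n + 1" h] by (simp add: algebra_simps)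

lemma sigma_apell_double_even:
  "even h \<Longrightarrow> sigma apell (2 * h) n = 2 * pell h * apell (h + n + 1)"
  using sigma_apell[of "2 * h" n] pell_add_double_minus[of "n + 1" h] by (simp add: algebra_simps)

lemma sigma_apell_double_odd:
  "odd h \<Longrightarrow> sigma apell (2 * h) n = 2 * apell h * pell (h + n + 1)"
  using sigma_apell[of "2 * h" n] pell_add_double_plus[of "n + 1" h] by (simp add: algebra_simps)

lemma sigma_bal_even: "even k \<Longrightarrow> 2 * sigma bal k n = pell k * apell (k + 2 * n + 1)"
  using sigma_bal[of k n] pell_add_double_minus[of "2 * n + 1" k] by (simp add: algebra_simps)

lemma sigma_bal_odd: "odd k \<Longrightarrow> 2 * sigma bal k n = apell k * pell (k + 2 * n + 1)"
  using sigma_bal[of k n] pell_add_double_plus[of "2 * n + 1" k] by (simp add: algebra_simps)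

lemma sigma_lbal_even: "even k \<Longrightarrow> sigma lbal k n = 2 * pell k * pell (k + 2 * n + 1)"
  using sigma_lbal[of k n] apell_add_double_minus[of "2 * n + 1" k] by (simp add: algebra_simps)

lemma sigma_lbal_odd: "odd k \<Longrightarrow> sigma lbal k n = apell k * apell (k + 2 * n + 1)"
  using sigma_lbal[of k n] apell_add_double_plus[of "2 * n + 1" k] by (simp add: algebra_simps)

lemma sigma_lcobal_even: "even k \<Longrightarrow> sigma lcobal k n = 2 * pell k * pell (k + 2 * n)"
  using sigma_lcobal[of k n] apell_add_double_minus[of "2 * n" k] by (simp add: algebra_simps)

lemma sigma_lcobal_odd: "odd k \<Longrightarrow> sigma lcobal k n = apell k * apell (k + 2 * n)"
  using sigma_lcobal[of k n] apell_add_double_plus[of "2 * n" k] by (simp add: algebra_simps)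

lemma of_int_eq_divide_of_mult_eq:
  "c * x = y \<Longrightarrow> c \<noteq> 0 \<Longrightarrow> real_of_int x = of_int y / of_int c"
  by (auto simp: field_simps simp flip: of_int_mult)

theorem theorem14:
  fixes k n :: nat
  assumes "k \<ge> 1"
  shows
   "(real_of_int (sigma pell k n) = (apell (n+k+1) - apell (n+1)) / 2
    \<and> (k mod 4 = 0 \<longrightarrow> sigma pell k n = 2 * pell (k div 2) * pell (k div 2 + n + 1))
    \<and> (k mod 4 = 2 \<longrightarrow> sigma pell k n = apell (k div 2) * apell (k div 2 + n + 1)))
    \<and> (sigma apell k n = pell (n+k+1) - pell (n+1)
    \<and> (k mod 4 = 0 \<longrightarrow> sigma apell k n = 2 * pell (k div 2) * apell (k div 2 + n + 1))
    \<and> (k mod 4 = 2 \<longrightarrow> sigma apell k n = 2 * apell (k div 2) * pell (k div 2 + n + 1)))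
    \<and> (real_of_int (sigma bal k n) = (pell (2*k+2*n+1) - pell (2*n+1)) / 4
    \<and> (even k \<longrightarrow> real_of_int (sigma bal k n) = pell k * apell (k+2*n+1) / 2)
    \<and> (odd k \<longrightarrow> real_of_int (sigma bal k n) = apell k * pell (k+2*n+1) / 2))
    \<and> (real_of_int (sigma lbal k n) = (apell (2*k+2*n+1) - apell (2*n+1)) / 2
    \<and> (even k \<longrightarrow> sigma lbal k n = 2 * pell k * pell (k+2*n+1))
    \<and> (odd k \<longrightarrow> sigma lbal k n = apell k * apell (k+2*n+1)))
    \<and> (real_of_int (sigma lcobal k n) = (apell (2*k+2*n) - apell (2*n)) / 2
    \<and> (even k \<longrightarrow> sigma lcobal k n = 2 * pell k * pell (k+2*n))
    \<and> (odd k \<longrightarrow> sigma lcobal k n = apell k * apell (k+2*n)))"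
proof -
  have real_sums:
    "real_of_int (sigma pell k n) = (apell (n+k+1) - apell (n+1)) / 2"
    "real_of_int (sigma bal k n) = (pell (2*k+2*n+1) - pell (2*n+1)) / 4"
    "real_of_int (sigma lbal k n) = (apell (2*k+2*n+1) - apell (2*n+1)) / 2"
    "real_of_int (sigma lcobal k n) = (apell (2*k+2*n) - apell (2*n)) / 2"
    by (simp_all add: of_int_eq_divide_of_mult_eq[OF sigma_pell]
        of_int_eq_divide_of_mult_eq[OF sigma_bal] of_int_eq_divide_of_mult_eq[OF sigma_lbal]
        of_int_eq_divide_of_mult_eq[OF sigma_lcobal])
  have real_bal:
    "even k \<Longrightarrow> real_of_int (sigma bal k n) = pell k * apell (k+2*n+1) / 2"
    "odd k \<Longrightarrow> real_of_int (sigma bal k n) = apell k * pell (k+2*n+1) / 2"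
    by (simp_all add: of_int_eq_divide_of_mult_eq[OF sigma_bal_even]
        of_int_eq_divide_of_mult_eq[OF sigma_bal_odd])
  have "\<exists>h. k = 2 * h \<and> even h" if "k mod 4 = 0" using that by presburger
  moreover have "\<exists>h. k = 2 * h \<and> odd h" if "k mod 4 = 2" using that by presburger
  ultimately show ?thesis
    using real_sums real_bal sigma_apell[of k n]
      sigma_pell_double_even sigma_pell_double_odd sigma_apell_double_even sigma_apell_double_odd
      sigma_lbal_even sigma_lbal_odd sigma_lcobal_even sigma_lcobal_odd
    by auto
qed

end
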